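(* Assume additionally that $f(\mathbf x,\cdot)$ is convex for every $\mathbf x\in\mathcal X$. Let $\{\mathbf y_k(\cdot,\cdot)\}_{k\ge0}$ be a sequence of maps $\mathcal X\times\mathcal Y\to\mathbb R^m$ such that $\mathbf y_k(\mathbf x,\mathbf z)\in\mathcal Y$ for all $k,\mathbf x,\mathbf z$, and $\mathbf y_k(\mathbf x,\mathbf z)=\mathbf z$ for all $k\ge0$, $\mathbf x\in\mathcal X$, $\mathbf z\in\mathcal S(\mathbf x)$. Suppose that either (a) for every $\epsilon>0$ there is $k(\epsilon)>0$ such that for all $K>k(\epsilon)$, $\sup_{\mathbf x\in\mathcal X,\mathbf z\in\mathcal Y}\{f(\mathbf x,\mathbf y_K(\mathbf x,\mathbf z))-f^*(\mathbf x)\}\le\epsilon$; or (b) there is $\alpha>0$ such that for every $\epsilon>0$ there is $k(\epsilon)>0$ such that for all $K>k(\epsilon)$, $\sup_{\mathbf x\in\mathcal X,\mathbf z\in\mathcal Y}\|\mathcal R_\alpha(\mathbf x,\mathbf y_K(\mathbf x,\mathbf z))\|\le\epsilon$. For $K\ge1$ let $\phi_K(\mathbf x,\mathbf z):=F(\mathbf x,\mathbf y_K(\mathbf x,\mathbf z))$ and let $(\mathbf x_K,\mathbf z_K)\in\arg\min_{\mathbf x\in\mathcal X,\mathbf z\in\mathcal Y}\phi_K(\mathbf x,\mathbf z)$ (assumed to exist). Then: (1) every limit point $\bar{\mathbf x}$ of $\{\mathbf x_K\}$ satisfies $\bar{\mathbf x}\in\arg\min_{\mathbf x\in\mathcal X}\varphi(\mathbf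 x)$; (2) $\inf_{\mathbf x\in\mathcal X,\mathbf z\in\mathcal Y}\phi_K(\mathbf x,\mathbf z)\to\inf_{\mathbf x\in\mathcal X}\varphi(\mathbf x)$ as $K\to\infty$.
   Context: Let $F,f:\mathbb R^n\times\mathbb R^m\to\mathbb R$ and $\mathcal X\subset\mathbb R^n$, $\mathcal Y\subset\mathbb R^m$. Standing assumptions: (i) $F$ and $f$ are continuous; (ii) $f$ is differentiable, $\nabla f$ is continuous, and there is $L_f>0$ such that for every $\mathbf x\in\mathcal X$ the map $\mathbf y\mapsto\nabla_{\mathbf y}f(\mathbf x,\mathbf y)$ is $L_f$-Lipschitz; (iii) $\mathcal X$ and $\mathcal Y$ are nonempty convex compact sets; (iv) $\mathcal S(\mathbf x):=\arg\min_{\mathbf y\in\mathcal Y}f(\mathbf x,\mathbf y)$ is nonempty for every $\mathbf x\in\mathcal X$. Notation: $f^*(\mathbf x):=\min_{\mathbf y\in\mathcal Y}f(\mathbf x,\mathbf y)$; $\varphi(\mathbf x):=\inf_{\mathbf y\in\mathcal S(\mathbf x)}F(\mathbf x,\mathbf y)$; $\mathtt{Proj}_{\mathcal Y}$ is Euclidean projection onto $\mathcal Y$; for $\alpha>0$, $\mathcal R_\alpha(\mathbf x,\mathbf y):=\mathbf y-\mathtt{Proj}_{\mathcal Y}(\mathbf y-\alpha\nabla_{\mathbf y}f(\mathbf x,\mathbf y))$. *)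

theory Defs
  imports "HOL-Analysis.Analysis"
begin

definition Sol :: "('a \<Rightarrow> 'b \<Rightarrow> real) \<Rightarrow> 'b set \<Rightarrow> 'a \<Rightarrow> 'b set" where
  "Sol f Y x = {y \<in> Y. \<forall>y'\<in>Y. f x y \<le> f x y'}"

definition fstar :: "('a \<Rightarrow> 'b \<Rightarrow> real) \<Rightarrow> 'b set \<Rightarrow> 'a \<Rightarrow> real" where
  "fstar f Y x = (INF y\<in>Y. f x y)"

definition varphi :: "('a \<Rightarrow> 'b \<Rightarrow> real) \<Rightarrow> ('a \<Rightarrow> 'b \<Rightarrow> real) \<Rightarrow> 'b set \<Rightarrow> 'a \<Rightarrow> real" where
  "varphi F f Y x = (INF y\<in>Sol f Y x. F x y)"

definition Proj :: "'b::euclidean_space set \<Rightarrow> 'b \<Rightarrow> 'b" where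
  "Proj Y v = closest_point Y v"

text \<open>Proximal residual R_alpha(x,y) = y - Proj_Y(y - alpha * grad_y f(x,y)),
  where gyf x y is the partial gradient of f w.r.t. y.\<close>
definition Res :: "'b::euclidean_space set \<Rightarrow> ('a \<Rightarrow> 'b \<Rightarrow> 'b) \<Rightarrow> real \<Rightarrow> 'a \<Rightarrow> 'b \<Rightarrow> 'b" where
  "Res Y gyf \<alpha> x y = y - Proj Y (y - \<alpha> *\<^sub>R gyf x y)"

end

theory Submission
  imports Defs
begin

(* Every limit (xbar, ybar) of the pairs (x_K, y_K(x_K, z_K)) has ybar in S(xbar): under (a)
   because the gap f - f* vanishes in the limit, under (b) because the projected-gradient
   residual vanishes, so ybar is a fixed point of the projected gradient step, which for the
   convex f(xbar, .) means ybar is a lower-level minimizer. Since y_K fixes lower-level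
   solutions, min phi_K <= varphi(x) for every x in X, so in the limit
   F(xbar, ybar) <= inf varphi <= varphi(xbar) <= F(xbar, ybar). By compactness every
   subsequence has such a further convergent subsequence, which gives both claims. *)

lemma LIMSEQ_if_subseqs_have_LIMSEQ_subseq:
  fixes X :: "nat \<Rightarrow> 'a::topological_space"
  assumes "\<And>r::nat \<Rightarrow> nat. strict_mono r \<Longrightarrow> \<exists>s. strict_mono s \<and> (X \<circ> r \<circ> s) \<longlonglongrightarrow> L"
  shows "X \<longlonglongrightarrow> L"
proof (rule ccontr)
  assume "\<not> X \<longlonglongrightarrow> L"
  then obtain U where U: "open U" "L \<in> U" "\<not> eventually (\<lambda>n. X n \<in> U) sequentially"
    unfolding tendsto_def by blast
  then obtain r :: "nat \<Rightarrow> nat" where r: "strict_mono r" "\<And>n. X (r n) \<notin> U"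
    using not_eventually_sequentiallyD by blast
  obtain s where "strict_mono s" "(X \<circ> r \<circ> s) \<longlonglongrightarrow> L"
    using assms[OF r(1)] by blast
  then have "eventually (\<lambda>n. X (r (s n)) \<in> U) sequentially"
    using U(1,2) unfolding tendsto_def by auto
  then show False
    using r(2) by (simp add: eventually_sequentially)
qed

lemma LIMSEQ_INF_of_subseqs_minimizing:
  fixes m :: "nat \<Rightarrow> real" and \<phi> :: "'a \<Rightarrow> real"
  assumes "\<And>r::nat \<Rightarrow> nat. strict_mono r \<Longrightarrow>
    \<exists>s a. strict_mono s \<and> a \<in> X \<and> (\<forall>x\<in>X. \<phi> a \<le> \<phi> x) \<and> (m \<circ> r \<circ> s) \<longlonglongrightarrow> \<phi> a"
  shows "m \<longlonglongrightarrow> (INF x\<in>X. \<phi> x)"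
proof (rule LIMSEQ_if_subseqs_have_LIMSEQ_subseq)
  fix r :: "nat \<Rightarrow> nat"
  assume "strict_mono r"
  then obtain s a where "strict_mono s" "a \<in> X" "\<forall>x\<in>X. \<phi> a \<le> \<phi> x" "(m \<circ> r \<circ> s) \<longlonglongrightarrow> \<phi> a"
    using assms by blast
  moreover have "(INF x\<in>X. \<phi> x) = \<phi> a"
    using calculation(2,3) by (intro cInf_eq_minimum) auto
  ultimately show "\<exists>s. strict_mono s \<and> (m \<circ> r \<circ> s) \<longlonglongrightarrow> (INF x\<in>X. \<phi> x)"
    by auto
qed

lemma eventually_subseq_of_uniform_bound:
  fixes g :: "nat \<Rightarrow> 'a \<Rightarrow> 'b \<Rightarrow> real"
  assumes "\<forall>\<epsilon>>0. \<exists>k0::nat>0. \<forall>K>k0. \<forall>x\<in>X. \<forall>z\<in>Y. g K x z \<le> \<epsilon>"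
    and "strict_mono t" "\<And>n. x n \<in> X" "\<And>n. z n \<in> Y"
  shows "\<forall>\<epsilon>>0. eventually (\<lambda>n. g (t n) (x n) (z n) \<le> \<epsilon>) sequentially"
proof (intro allI impI)
  fix \<epsilon> :: real
  assume "\<epsilon> > 0"
  then obtain k0 where k0: "\<forall>K>k0. \<forall>x\<in>X. \<forall>z\<in>Y. g K x z \<le> \<epsilon>"
    using assms(1) by blast
  have "k0 < t n" if "Suc k0 \<le> n" for n
    using seq_suble[OF assms(2), of n] that by linarith
  then show "eventually (\<lambda>n. g (t n) (x n) (z n) \<le> \<epsilon>) sequentially"
    unfolding eventually_sequentially using k0 assms(3,4) by blast
qed

lemma cINF_lower_continuous_on_compact:
  fixes g :: "'a::topological_space \<Rightarrow> real"
  assumes "compact K" "continuous_on K g" "A \<subseteq> K" "y \<in> A"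
  shows "(INF y\<in>A. g y) \<le> g y"
proof (rule cINF_lower[OF _ assms(4)])
  have "bdd_below (g ` K)"
    using assms(1,2) by (intro bounded_imp_bdd_below compact_imp_bounded compact_continuous_image)
  then show "bdd_below (g ` A)"
    using assms(3) by (meson bdd_below_mono image_mono)
qed

lemma continuous_on_curry:
  assumes "continuous_on UNIV (\<lambda>p. g (fst p) (snd p))"
  shows "continuous_on S (g x)"
  using continuous_on_compose2[OF assms continuous_on_Pair[OF continuous_on_const continuous_on_id]]
  by simp

lemma has_derivative_partial_snd:
  fixes g :: "'a::real_inner \<Rightarrow> 'b::real_inner \<Rightarrow> real"
  assumes "((\<lambda>p. g (fst p) (snd p)) has_derivative (\<lambda>h. D \<bullet> h)) (at (a, b))"
  shows "(g a has_derivative (\<lambda>h. snd D \<bullet> h)) (at b)"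
proof -
  have "((\<lambda>y. (a, y)) has_derivative (\<lambda>h. (0, h))) (at b)"
    by (auto intro!: derivative_eq_intros)
  from has_derivative_compose[OF this assms] show ?thesis
    by (simp add: inner_prod_def)
qed

lemma convex_on_gradient_inequality:
  fixes g :: "'b::real_inner \<Rightarrow> real"
  assumes convex: "convex_on UNIV g" and deriv: "(g has_derivative (\<lambda>h. G \<bullet> h)) (at b)"
  shows "G \<bullet> (w - b) \<le> g w - g b"
proof -
  define \<gamma> where "\<gamma> = (\<lambda>t::real. g (b + t *\<^sub>R (w - b)))"
  have "((\<lambda>t::real. b + t *\<^sub>R (w - b)) has_derivative (\<lambda>t. t *\<^sub>R (w - b))) (at 0)"
    by (auto intro!: derivative_eq_intros)
  moreover have "(g has_derivative (\<lambda>h. G \<bullet> h)) (at (b + 0 *\<^sub>R (w - b)))"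
    using deriv by simp
  ultimately have "(\<gamma> has_derivative (\<lambda>t. t * (G \<bullet> (w - b)))) (at 0)"
    unfolding \<gamma>_def by (auto dest: has_derivative_compose)
  then have "(\<gamma> has_field_derivative G \<bullet> (w - b)) (at 0)"
    by (simp add: has_real_derivative_iff_has_vector_derivative has_vector_derivative_def)
  moreover have "convex_on UNIV \<gamma>"
  proof (rule convex_onI)
    fix t x y :: real
    assume "0 < t" "t < 1"
    moreover have "b + ((1 - t) * x + t * y) *\<^sub>R (w - b)
        = (1 - t) *\<^sub>R (b + x *\<^sub>R (w - b)) + t *\<^sub>R (b + y *\<^sub>R (w - b))"
      by (simp add: algebra_simps)
    ultimately show "\<gamma> ((1 - t) *\<^sub>R x + t *\<^sub>R y) \<le> (1 - t) * \<gamma> x + t * \<gamma> y"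
      using convex_onD[OF convex, of t] unfolding \<gamma>_def by simp
  qed simp
  ultimately have "G \<bullet> (w - b) * (1 - 0) \<le> \<gamma> 1 - \<gamma> 0"
    by (intro convex_on_imp_above_tangent) auto
  then show ?thesis
    unfolding \<gamma>_def by simp
qed

lemma mem_Sol_of_closest_point_fixed:
  fixes f :: "'a \<Rightarrow> 'b::euclidean_space \<Rightarrow> real"
  assumes "convex Y" "closed Y" "Y \<noteq> {}" "\<alpha> > 0"
    and convex: "convex_on UNIV (f a)" and deriv: "(f a has_derivative (\<lambda>h. G \<bullet> h)) (at b)"
    and fixed: "closest_point Y (b - \<alpha> *\<^sub>R G) = b"
  shows "b \<in> Sol f Y a"
proof -
  have "b \<in> Y"
    using closest_point_in_set[OF assms(2,3)] fixed by metis
  moreover have "f a b \<le> f a u" if "u \<in> Y" for u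
  proof -
    have "((b - \<alpha> *\<^sub>R G) - b) \<bullet> (u - b) \<le> 0"
      using closest_point_dot[OF assms(1,2) that, of "b - \<alpha> *\<^sub>R G"] fixed by simp
    then have "0 \<le> G \<bullet> (u - b)"
      using \<open>\<alpha> > 0\<close> by (simp add: zero_le_mult_iff)
    also have "\<dots> \<le> f a u - f a b"
      by (rule convex_on_gradient_inequality[OF convex deriv])
    finally show ?thesis by simp
  qed
  ultimately show ?thesis
    unfolding Sol_def by blast
qed

lemma mem_Sol_of_residual_limit:
  fixes f :: "'a::euclidean_space \<Rightarrow> 'b::euclidean_space \<Rightarrow> real"
    and Df :: "'a \<times> 'b \<Rightarrow> 'a \<times> 'b"
  assumes f_diff: "\<And>p. ((\<lambda>p. f (fst p) (snd p)) has_derivative (\<lambda>h. Df p \<bullet> h)) (at p)"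
    and Df_cont: "continuous_on UNIV Df"
    and Y: "convex Y" "closed Y" "Y \<noteq> {}" and "\<alpha> > 0"
    and convex: "convex_on UNIV (f a)"
    and lim: "x \<longlonglongrightarrow> a" "w \<longlonglongrightarrow> b"
    and residual: "\<forall>\<epsilon>>0. eventually (\<lambda>n.
        norm (Res Y (\<lambda>x y. snd (Df (x, y))) \<alpha> (x n) (w n)) \<le> \<epsilon>) sequentially"
  shows "b \<in> Sol f Y a"
proof -
  define R where "R = (\<lambda>p. snd p - closest_point Y (snd p - \<alpha> *\<^sub>R snd (Df p)))"
  have R_Res: "R (x, y) = Res Y (\<lambda>x y. snd (Df (x, y))) \<alpha> x y" for x y
    unfolding R_def Res_def Proj_def by simp
  have "continuous_on UNIV (\<lambda>p. snd p - \<alpha> *\<^sub>R snd (Df p))"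
    by (intro continuous_intros Df_cont)
  then have "continuous_on UNIV (\<lambda>p. closest_point Y (snd p - \<alpha> *\<^sub>R snd (Df p)))"
    by (rule continuous_on_compose2[OF continuous_on_closest_point[OF Y]]) auto
  then have "continuous_on UNIV R"
    unfolding R_def by (intro continuous_on_diff continuous_on_snd continuous_on_id)
  from continuous_on_tendsto_compose[OF this tendsto_Pair[OF lim]]
  have "(\<lambda>n. R (x n, w n)) \<longlonglongrightarrow> R (a, b)"
    by simp
  then have "norm (R (a, b)) \<le> \<epsilon>" if "\<epsilon> > 0" for \<epsilon>
    using residual that unfolding R_Res by (intro Lim_norm_ubound) auto
  then have "norm (R (a, b)) \<le> 0"
    by (rule field_le_epsilon) simp
  then have "R (a, b) = 0"
    by simp
  then have "closest_point Y (b - \<alpha> *\<^sub>R snd (Df (a, b))) = b"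
    unfolding R_def by simp
  then show ?thesis
    using mem_Sol_of_closest_point_fixed[where f = f and a = a, OF Y \<open>\<alpha> > 0\<close> convex
        has_derivative_partial_snd[OF f_diff]] by blast
qed

lemma mem_Sol_of_value_gap_limit:
  fixes f :: "'a::topological_space \<Rightarrow> 'b::t2_space \<Rightarrow> real"
  assumes f_cont: "continuous_on UNIV (\<lambda>p. f (fst p) (snd p))"
    and "compact Y" "\<And>n. w n \<in> Y"
    and lim: "x \<longlonglongrightarrow> a" "w \<longlonglongrightarrow> b"
    and gap: "\<forall>\<epsilon>>0. eventually (\<lambda>n. f (x n) (w n) - fstar f Y (x n) \<le> \<epsilon>) sequentially"
  shows "b \<in> Sol f Y a"
proof -
  have "b \<in> Y"
    using closed_sequentially[OF compact_imp_closed[OF \<open>compact Y\<close>] _ lim(2)] assms(3) by blast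
  moreover have "f a b \<le> f a u" if "u \<in> Y" for u
  proof (rule field_le_epsilon)
    fix \<epsilon> :: real
    assume "\<epsilon> > 0"
    have fstar_le: "fstar f Y (x n) \<le> f (x n) u" for n
      unfolding fstar_def
      by (rule cINF_lower_continuous_on_compact[OF \<open>compact Y\<close> continuous_on_curry[OF f_cont]
            order.refl that])
    have "eventually (\<lambda>n. f (x n) (w n) - fstar f Y (x n) \<le> \<epsilon>) sequentially"
      using gap \<open>\<epsilon> > 0\<close> by blast
    then have "eventually (\<lambda>n. f (x n) (w n) \<le> f (x n) u + \<epsilon>) sequentially"
      by (elim eventually_mono) (smt (verit) fstar_le)
    moreover have "(\<lambda>n. f (x n) (w n)) \<longlonglongrightarrow> f a b"
      using continuous_on_tendsto_compose[OF f_cont tendsto_Pair[OF lim]] by simp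
    moreover have "(\<lambda>n. f (x n) u + \<epsilon>) \<longlonglongrightarrow> f a u + \<epsilon>"
      using continuous_on_tendsto_compose[OF f_cont tendsto_Pair[OF lim(1) tendsto_const]]
      by (auto intro: tendsto_add)
    ultimately show "f a b \<le> f a u + \<epsilon>"
      by (intro tendsto_le[OF sequentially_bot]) auto
  qed
  ultimately show ?thesis
    unfolding Sol_def by blast
qed

lemma limit_point_mem_Sol:
  fixes f :: "'a::euclidean_space \<Rightarrow> 'b::euclidean_space \<Rightarrow> real"
    and Df :: "'a \<times> 'b \<Rightarrow> 'a \<times> 'b"
    and yk :: "nat \<Rightarrow> 'a \<Rightarrow> 'b \<Rightarrow> 'b"
  assumes f_cont: "continuous_on UNIV (\<lambda>p. f (fst p) (snd p))"
    and f_diff: "\<And>p. ((\<lambda>p. f (fst p) (snd p)) has_derivative (\<lambda>h. Df p \<bullet> h)) (at p)"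
    and Df_cont: "continuous_on UNIV Df"
    and "closed X" and Y: "convex Y" "compact Y" "Y \<noteq> {}"
    and f_convex: "\<And>x. x \<in> X \<Longrightarrow> convex_on UNIV (f x)"
    and yk_in: "\<And>k x z. x \<in> X \<Longrightarrow> z \<in> Y \<Longrightarrow> yk k x z \<in> Y"
    and conv: "(\<forall>\<epsilon>>0. \<exists>k0::nat>0. \<forall>K>k0. \<forall>x\<in>X. \<forall>z\<in>Y.
                   f x (yk K x z) - fstar f Y x \<le> \<epsilon>)
             \<or> (\<exists>\<alpha>>0. \<forall>\<epsilon>>0. \<exists>k0::nat>0. \<forall>K>k0. \<forall>x\<in>X. \<forall>z\<in>Y.
                   norm (Res Y (\<lambda>x y. snd (Df (x, y))) \<alpha> x (yk K x z)) \<le> \<epsilon>)"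
    and t: "strict_mono t" and xz: "\<And>n. x n \<in> X" "\<And>n. z n \<in> Y"
    and lim: "x \<longlonglongrightarrow> a" "(\<lambda>n. yk (t n) (x n) (z n)) \<longlonglongrightarrow> b"
  shows "b \<in> Sol f Y a"
proof -
  have "a \<in> X"
    using closed_sequentially[OF \<open>closed X\<close> _ lim(1)] xz(1) by blast
  from conv show ?thesis
  proof
    assume "\<forall>\<epsilon>>0. \<exists>k0::nat>0. \<forall>K>k0. \<forall>x\<in>X. \<forall>z\<in>Y. f x (yk K x z) - fstar f Y x \<le> \<epsilon>"
    from eventually_subseq_of_uniform_bound[OF this t xz]
    show ?thesis
      by (rule mem_Sol_of_value_gap_limit[OF f_cont \<open>compact Y\<close> yk_in[OF xz] lim])
  next
    assume "\<exists>\<alpha>>0. \<forall>\<epsilon>>0. \<exists>k0::nat>0. \<forall>K>k0. \<forall>x\<in>X. \<forall>z\<in>Y.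
              norm (Res Y (\<lambda>x y. snd (Df (x, y))) \<alpha> x (yk K x z)) \<le> \<epsilon>"
    then obtain \<alpha> where "\<alpha> > 0" and "\<forall>\<epsilon>>0. \<exists>k0::nat>0. \<forall>K>k0. \<forall>x\<in>X. \<forall>z\<in>Y.
              norm (Res Y (\<lambda>x y. snd (Df (x, y))) \<alpha> x (yk K x z)) \<le> \<epsilon>"
      by blast
    from eventually_subseq_of_uniform_bound[OF this(2) t xz]
    show ?thesis
      by (rule mem_Sol_of_residual_limit[OF f_diff Df_cont Y(1) compact_imp_closed[OF Y(2)] Y(3)
            \<open>\<alpha> > 0\<close> f_convex[OF \<open>a \<in> X\<close>] lim])
  qed
qed

lemma le_varphi_if_fixes_Sol:
  assumes "Sol f Y x \<noteq> {}"
    and "\<And>z. z \<in> Sol f Y x \<Longrightarrow> g z = z"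
    and "\<And>z. z \<in> Y \<Longrightarrow> v \<le> F x (g z)"
  shows "v \<le> varphi F f Y x"
  unfolding varphi_def
proof (rule cINF_greatest[OF assms(1)])
  fix z
  assume "z \<in> Sol f Y x"
  then show "v \<le> F x z"
    using assms(2,3)[of z] unfolding Sol_def by auto
qed

lemma subseq_limit_minimizes_varphi:
  fixes F f :: "'a::metric_space \<Rightarrow> 'b::metric_space \<Rightarrow> real"
    and xs :: "nat \<Rightarrow> 'a" and w :: "nat \<Rightarrow> 'b" and r :: "nat \<Rightarrow> nat"
  assumes F_cont: "continuous_on UNIV (\<lambda>p. F (fst p) (snd p))"
    and compact: "compact X" "compact Y"
    and in_XY: "\<And>K. 1 \<le> K \<Longrightarrow> xs K \<in> X \<and> w K \<in> Y"
    and le_varphi: "\<And>K x. 1 \<le> K \<Longrightarrow> x \<in> X \<Longrightarrow> F (xs K) (w K) \<le> varphi F f Y x"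
    and limit_Sol: "\<And>t a b. strict_mono t \<Longrightarrow> (\<And>n. 1 \<le> t n) \<Longrightarrow>
        (xs \<circ> t) \<longlonglongrightarrow> a \<Longrightarrow> (w \<circ> t) \<longlonglongrightarrow> b \<Longrightarrow> b \<in> Sol f Y a"
    and r: "strict_mono r"
  shows "\<exists>s a. strict_mono s \<and> (xs \<circ> r \<circ> s) \<longlonglongrightarrow> a \<and> a \<in> X
    \<and> (\<forall>x\<in>X. varphi F f Y a \<le> varphi F f Y x)
    \<and> ((\<lambda>K. F (xs K) (w K)) \<circ> r \<circ> s) \<longlonglongrightarrow> varphi F f Y a"
proof -
  have r_pos: "1 \<le> r (Suc n)" for n
    using strict_monoD[OF r, of 0 "Suc n"] by simp
  then have "(xs (r (Suc n)), w (r (Suc n))) \<in> X \<times> Y" for n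
    using in_XY by blast
  then obtain l s where "strict_mono s"
    and lim: "((\<lambda>n. (xs (r (Suc n)), w (r (Suc n)))) \<circ> s) \<longlonglongrightarrow> l"
    using compact_imp_seq_compact[OF compact_Times[OF compact]] unfolding seq_compact_def by meson
  obtain a b where l: "l = (a, b)"
    by fastforce
  define s' where "s' = Suc \<circ> s"
  have s': "strict_mono s'"
    using \<open>strict_mono s\<close> unfolding s'_def strict_mono_def by simp
  have t: "strict_mono (r \<circ> s')" "\<And>n. 1 \<le> (r \<circ> s') n"
    using strict_mono_o[OF r s'] r_pos unfolding s'_def by auto
  have lim_x: "(xs \<circ> (r \<circ> s')) \<longlonglongrightarrow> a" and lim_w: "(w \<circ> (r \<circ> s')) \<longlonglongrightarrow> b"
    using tendsto_fst[OF lim] tendsto_snd[OF lim] unfolding l s'_def by (simp_all add: o_def)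
  have "a \<in> X"
    using closed_sequentially[OF compact_imp_closed[OF compact(1)] _ lim_x] in_XY t(2) by auto
  have "b \<in> Sol f Y a"
    using limit_Sol[OF t lim_x lim_w] .
  have lim_F: "((\<lambda>K. F (xs K) (w K)) \<circ> r \<circ> s') \<longlonglongrightarrow> F a b"
    using continuous_on_tendsto_compose[OF F_cont tendsto_Pair[OF lim_x lim_w]] by (simp add: o_def)
  have F_le: "F a b \<le> varphi F f Y x" if "x \<in> X" for x
    using lim_F le_varphi[OF t(2) that] by (intro LIMSEQ_le_const2) auto
  have "varphi F f Y a \<le> F a b"
    unfolding varphi_def using \<open>b \<in> Sol f Y a\<close>
    by (intro cINF_lower_continuous_on_compact[OF compact(2) continuous_on_curry[OF F_cont]])
      (auto simp: Sol_def)
  with F_le[OF \<open>a \<in> X\<close>] have "varphi F f Y a = F a b"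
    by linarith
  then show ?thesis
    using s' lim_x lim_F F_le \<open>a \<in> X\<close> by (intro exI[of _ s'] exI[of _ a]) (auto simp: o_assoc)
qed

theorem theorem3p3:
  fixes F f :: "'a::euclidean_space \<Rightarrow> 'b::euclidean_space \<Rightarrow> real"
    and Df :: "'a \<times> 'b \<Rightarrow> 'a \<times> 'b"
    and X :: "'a set" and Y :: "'b set"
    and yk :: "nat \<Rightarrow> 'a \<Rightarrow> 'b \<Rightarrow> 'b"
    and xs :: "nat \<Rightarrow> 'a" and zs :: "nat \<Rightarrow> 'b"
  assumes F_cont: "continuous_on UNIV (\<lambda>p. F (fst p) (snd p))"
    and f_cont: "continuous_on UNIV (\<lambda>p. f (fst p) (snd p))"
    and f_diff: "\<And>p. ((\<lambda>p. f (fst p) (snd p)) has_derivative (\<lambda>h. Df p \<bullet> h)) (at p)"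
    and Df_cont: "continuous_on UNIV Df"
    and Lip: "\<exists>Lf>0. \<forall>x\<in>X. \<forall>y y'. norm (snd (Df (x, y)) - snd (Df (x, y'))) \<le> Lf * norm (y - y')"
    and X_conv: "convex X" and X_comp: "compact X" and X_ne: "X \<noteq> {}"
    and Y_conv: "convex Y" and Y_comp: "compact Y" and Y_ne: "Y \<noteq> {}"
    and S_ne: "\<And>x. x \<in> X \<Longrightarrow> Sol f Y x \<noteq> {}"
    and f_convex: "\<And>x. x \<in> X \<Longrightarrow> convex_on UNIV (f x)"
    and yk_in: "\<And>k x z. x \<in> X \<Longrightarrow> z \<in> Y \<Longrightarrow> yk k x z \<in> Y"
    and yk_fix: "\<And>k x z. x \<in> X \<Longrightarrow> z \<in> Sol f Y x \<Longrightarrow> yk k x z = z"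
    and conv: "(\<forall>\<epsilon>>0. \<exists>k0::nat>0. \<forall>K>k0. \<forall>x\<in>X. \<forall>z\<in>Y.
                   f x (yk K x z) - fstar f Y x \<le> \<epsilon>)
             \<or> (\<exists>\<alpha>>0. \<forall>\<epsilon>>0. \<exists>k0::nat>0. \<forall>K>k0. \<forall>x\<in>X. \<forall>z\<in>Y.
                   norm (Res Y (\<lambda>x y. snd (Df (x, y))) \<alpha> x (yk K x z)) \<le> \<epsilon>)"
    and xs_in: "\<And>K. K \<ge> 1 \<Longrightarrow> xs K \<in> X"
    and zs_in: "\<And>K. K \<ge> 1 \<Longrightarrow> zs K \<in> Y"
    and argmin: "\<And>K x z. K \<ge> 1 \<Longrightarrow> x \<in> X \<Longrightarrow> z \<in> Y \<Longrightarrow>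
                   F (xs K) (yk K (xs K) (zs K)) \<le> F x (yk K x z)"
  shows "(\<forall>xbar r. strict_mono r \<and> (xs \<circ> r) \<longlonglongrightarrow> xbar \<longrightarrow>
             xbar \<in> X \<and> (\<forall>x\<in>X. varphi F f Y xbar \<le> varphi F f Y x))
       \<and> (\<lambda>K. INF p\<in>X \<times> Y. F (fst p) (yk K (fst p) (snd p)))
             \<longlonglongrightarrow> (INF x\<in>X. varphi F f Y x)"
proof -
  define w where "w K = yk K (xs K) (zs K)" for K
  have in_XY: "xs K \<in> X \<and> w K \<in> Y" if "1 \<le> K" for K
    using xs_in zs_in yk_in that unfolding w_def by blast
  have le_varphi: "F (xs K) (w K) \<le> varphi F f Y x" if "1 \<le> K" "x \<in> X" for K x
    using argmin[OF that] yk_fix[OF that(2)] unfolding w_def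
    by (intro le_varphi_if_fixes_Sol[where g = "yk K x", OF S_ne[OF that(2)]]) auto
  have limit_Sol: "b \<in> Sol f Y a"
    if "strict_mono t" "\<And>n. 1 \<le> t n" "(xs \<circ> t) \<longlonglongrightarrow> a" "(w \<circ> t) \<longlonglongrightarrow> b" for t a b
    using that xs_in zs_in unfolding w_def o_def
    by (intro limit_point_mem_Sol[OF f_cont f_diff Df_cont compact_imp_closed[OF X_comp]
          Y_conv Y_comp Y_ne f_convex yk_in conv, of t "\<lambda>n. xs (t n)" "\<lambda>n. zs (t n)"]) auto
  have subseq_limit: "\<exists>s a. strict_mono s \<and> (xs \<circ> r \<circ> s) \<longlonglongrightarrow> a \<and> a \<in> X
      \<and> (\<forall>x\<in>X. varphi F f Y a \<le> varphi F f Y x)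
      \<and> ((\<lambda>K. F (xs K) (w K)) \<circ> r \<circ> s) \<longlonglongrightarrow> varphi F f Y a" if "strict_mono r" for r :: "nat \<Rightarrow> nat"
    by (rule subseq_limit_minimizes_varphi[OF F_cont X_comp Y_comp]) (fact in_XY le_varphi limit_Sol that)+
  have minimizer: "xbar \<in> X \<and> (\<forall>x\<in>X. varphi F f Y xbar \<le> varphi F f Y x)"
    if "strict_mono r" "(xs \<circ> r) \<longlonglongrightarrow> xbar" for r xbar
    using subseq_limit[OF that(1)] LIMSEQ_subseq_LIMSEQ[OF that(2)] LIMSEQ_unique by blast
  have values_converge: "(\<lambda>K. F (xs K) (w K)) \<longlonglongrightarrow> (INF x\<in>X. varphi F f Y x)"
    using subseq_limit by (intro LIMSEQ_INF_of_subseqs_minimizing) blast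
  have "F (xs K) (w K) = (INF p\<in>X \<times> Y. F (fst p) (yk K (fst p) (snd p)))" if "1 \<le> K" for K
    unfolding w_def using that xs_in zs_in argmin by (intro cInf_eq_minimum[symmetric]) force+
  then have "(\<lambda>K. INF p\<in>X \<times> Y. F (fst p) (yk K (fst p) (snd p))) \<longlonglongrightarrow> (INF x\<in>X. varphi F f Y x)"
    by (intro Lim_transform_eventually[OF values_converge] eventually_sequentiallyI)
  with minimizer show ?thesis
    by blast
qed

end
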